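(* Let $\ell,\tilde\ell\in\mathcal{D}^-[0,\infty)$ and $r,\tilde r\in\mathcal{D}^+[0,\infty)$ with $\tilde\ell\le\ell$, $r=\tilde r$ and $\inf_{t\ge0}(r(t)-\ell(t))>0$. Given $\psi\in\mathcal{D}[0,\infty)$, let $(\eta_\ell,\eta_r)$ and $(\eta_{\tilde\ell},\eta_{\tilde r})$ be the constraining processes associated with the SP for $\psi$ on $[\ell(\cdot),r(\cdot)]$ and on $[\tilde\ell(\cdot),\tilde r(\cdot)]$, respectively. Then for every $t\ge0$, $\eta_r(t)\ge\eta_{\tilde r}(t)$ and $\eta_\ell(t)\ge\eta_{\tilde\ell}(t)$.
   Context: $\mathcal{D}[0,\infty)$ denotes the càdlàg functions $[0,\infty)\to(-\infty,\infty)$; $\mathcal{D}^-[0,\infty)$ (resp. $\mathcal{D}^+[0,\infty)$) denotes càdlàg functions with values in $[-\infty,\infty)$ (resp. $(-\infty,\infty]$). SP: $(\phi,\eta)\in\mathcal{D}[0,\infty)^2$ solves the SP on $[\ell(\cdot),r(\cdot)]$ for $\psi$ if (1) $\phi(t)=\psi(t)+\eta(t)\in[\ell(t),r(t)]$ for all $t\ge0$; (2) $\eta=\eta_\ell-\eta_r$ with $\eta_\ell,\eta_r$ non-decreasing and $\int_0^\infty \mathbb{I}_{\{\phi(s)>\ell(s)\}}\,d\eta_\ell(s)=0$, $\int_0^\infty \mathbb{I}_{\{\phi(s)<r(s)\}}\,d\eta_r(s)=0$. The pair $(\eta_\ell,\eta_r)$ is called the pair of constraining processes associated with the SP. When $\inf_t(r(t)-\ell(t))>0$,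 the SP has a unique solution for every $\psi\in\mathcal{D}[0,\infty)$. *)

theory Defs
  imports "HOL-Analysis.Analysis"
begin

definition cadlag :: "(real \<Rightarrow> 'a::topological_space) \<Rightarrow> bool" where
  "cadlag f \<longleftrightarrow> (\<forall>t\<ge>0. (f \<longlongrightarrow> f t) (at_right t)) \<and>
                 (\<forall>t>0. \<exists>L. (f \<longlongrightarrow> L) (at_left t))"

definition cadlag_minus :: "(real \<Rightarrow> ereal) \<Rightarrow> bool" where
  "cadlag_minus f \<longleftrightarrow> cadlag f \<and> (\<forall>t\<ge>0. f t \<noteq> \<infinity>)"

definition cadlag_plus :: "(real \<Rightarrow> ereal) \<Rightarrow> bool" where
  "cadlag_plus f \<longleftrightarrow> cadlag f \<and> (\<forall>t\<ge>0. f t \<noteq> -\<infinity>)"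

text \<open>Non-decreasing cadlag function on [0,infinity) with the convention f(0-) = 0,
  i.e. f 0 \<ge> 0.\<close>
definition nondecr :: "(real \<Rightarrow> real) \<Rightarrow> bool" where
  "nondecr f \<longleftrightarrow> cadlag f \<and> 0 \<le> f 0 \<and> (\<forall>s t. 0 \<le> s \<longrightarrow> s \<le> t \<longrightarrow> f s \<le> f t)"

text \<open>Lebesgue--Stieltjes measure d f of a non-decreasing f on [0,infinity), with
  f(0-) = 0 (so an atom of mass f 0 sits at 0).\<close>
definition LS_measure :: "(real \<Rightarrow> real) \<Rightarrow> real measure" where
  "LS_measure f = interval_measure (\<lambda>x. if x < 0 then 0 else f x)"

definition LS_indicator_integral :: "(real \<Rightarrow> real) \<Rightarrow> (real \<Rightarrow> bool) \<Rightarrow> ennreal" where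
  "LS_indicator_integral f P =
     (\<integral>\<^sup>+ s. indicator {s. 0 \<le> s \<and> P s} s \<partial>LS_measure f)"

definition SP_solution ::
  "(real \<Rightarrow> real) \<Rightarrow> (real \<Rightarrow> ereal) \<Rightarrow> (real \<Rightarrow> ereal) \<Rightarrow>
   (real \<Rightarrow> real) \<Rightarrow> (real \<Rightarrow> real) \<Rightarrow> bool" where
  "SP_solution \<psi> l r \<phi> \<eta> \<longleftrightarrow>
     cadlag \<phi> \<and> cadlag \<eta> \<and>
     (\<forall>t\<ge>0. \<phi> t = \<psi> t + \<eta> t \<and> l t \<le> ereal (\<phi> t) \<and> ereal (\<phi> t) \<le> r t) \<and>
     (\<exists>\<eta>l \<eta>r. nondecr \<eta>l \<and> nondecr \<eta>r \<and> (\<forall>t\<ge>0. \<eta> t = \<eta>l t - \<eta>r t) \<and>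
        LS_indicator_integral \<eta>l (\<lambda>s. ereal (\<phi> s) > l s) = 0 \<and>
        LS_indicator_integral \<eta>r (\<lambda>s. ereal (\<phi> s) < r s) = 0)"

definition constraining_pair ::
  "(real \<Rightarrow> real) \<Rightarrow> (real \<Rightarrow> ereal) \<Rightarrow> (real \<Rightarrow> ereal) \<Rightarrow>
   (real \<Rightarrow> real) \<Rightarrow> (real \<Rightarrow> real) \<Rightarrow> bool" where
  "constraining_pair \<psi> l r \<eta>l \<eta>r \<longleftrightarrow>
     (\<exists>\<phi> \<eta>. cadlag \<phi> \<and> cadlag \<eta> \<and>
        (\<forall>t\<ge>0. \<phi> t = \<psi> t + \<eta> t \<and> l t \<le> ereal (\<phi> t) \<and> ereal (\<phi> t) \<le> r t) \<and>
        nondecr \<eta>l \<and> nondecr \<eta>r \<and> (\<forall>t\<ge>0. \<eta> t = \<eta>l t - \<eta>r t) \<and>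
        LS_indicator_integral \<eta>l (\<lambda>s. ereal (\<phi> s) > l s) = 0 \<and>
        LS_indicator_integral \<eta>r (\<lambda>s. ereal (\<phi> s) < r s) = 0)"

end

theory Submission
  imports Defs
begin

text \<open>Let \<open>\<phi>\<close>, \<open>\<phi>'\<close> be the two solutions, \<open>D\<^sub>r = \<eta>\<^sub>r - \<eta>\<^sub>r'\<close> and
  \<open>D\<^sub>l = \<eta>\<^sub>l - \<eta>\<^sub>l'\<close>, so \<open>\<phi> - \<phi>' = D\<^sub>l - D\<^sub>r\<close>. Since the interval has positive width,
  at every time \<open>\<phi>'\<close> is away from \<open>r\<close> or from \<open>l'\<close>; if \<open>\<phi>' = r\<close> then \<open>\<phi> \<le> \<phi>'\<close>,
  i.e. \<open>D\<^sub>l \<le> D\<^sub>r\<close>, and if \<open>\<phi>' = l' \<le> l\<close> then \<open>D\<^sub>r \<le> D\<^sub>l\<close>. Consider the first time at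
  which \<open>D\<^sub>l\<close> or \<open>D\<^sub>r\<close> becomes negative. Say \<open>\<phi>' < r\<close> there; by right-continuity this
  persists for a while, during which \<open>\<eta>\<^sub>r'\<close> does not increase, so \<open>D\<^sub>r \<ge> 0\<close>. Wherever
  in addition \<open>D\<^sub>l < 0\<close> we get \<open>\<phi>' > \<phi> \<ge> l'\<close>, so \<open>\<eta>\<^sub>l'\<close> does not increase there
  either, which keeps \<open>D\<^sub>l \<ge> 0\<close>. The case \<open>l' < \<phi>'\<close> is symmetric. Hence there is no first
  violation time.\<close>

definition LS_distribution :: "(real \<Rightarrow> real) \<Rightarrow> real \<Rightarrow> real" where
  "LS_distribution f x = (if x < 0 then 0 else f x)"

lemma LS_distribution_mono:
  assumes "nondecr f" "x \<le> y"
  shows "LS_distribution f x \<le> LS_distribution f y"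
  using assms unfolding nondecr_def LS_distribution_def by (auto intro: order_trans[of 0 "f 0"])

lemma LS_distribution_continuous_right:
  assumes "nondecr f"
  shows "continuous (at_right a) (LS_distribution f)"
proof (cases "a < 0")
  case True
  have "eventually (\<lambda>x. x < 0) (at_right a)"
    using True unfolding eventually_at_right_field by (intro exI[of _ 0]) auto
  then have "eventually (\<lambda>x. LS_distribution f x = LS_distribution f a) (at_right a)"
    by eventually_elim (use True in \<open>auto simp: LS_distribution_def\<close>)
  then show ?thesis
    unfolding continuous_within by (rule tendsto_eventually)
next
  case False
  have "(f \<longlongrightarrow> f a) (at_right a)"
    using assms False unfolding nondecr_def cadlag_def by auto
  moreover have "eventually (\<lambda>x. f x = LS_distribution f x) (at_right a)"
    using eventually_at_right_less[of a]
    by eventually_elim (use False in \<open>auto simp: LS_distribution_def\<close>)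
  ultimately show ?thesis
    using False unfolding continuous_within LS_distribution_def
    by (simp add: tendsto_cong[THEN iffD1, rotated])
qed

lemma emeasure_LS_measure_Ioc:
  assumes "nondecr f" "a \<le> b"
  shows "emeasure (LS_measure f) {a<..b} = ennreal (LS_distribution f b - LS_distribution f a)"
proof -
  have "(\<lambda>x. if x < 0 then 0 else f x) = LS_distribution f"
    by (auto simp: LS_distribution_def)
  then show ?thesis
    unfolding LS_measure_def
    using assms LS_distribution_mono LS_distribution_continuous_right
    by (auto intro: emeasure_interval_measure_Ioc)
qed

lemma emeasure_LS_measure_null:
  assumes "LS_indicator_integral f P = 0" "A \<in> sets borel" "A \<subseteq> {s. 0 \<le> s \<and> P s}"
  shows "emeasure (LS_measure f) A = 0"
proof -
  have "emeasure (LS_measure f) A = (\<integral>\<^sup>+ s. indicator A s \<partial>LS_measure f)"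
    using assms(2) by (simp add: LS_measure_def)
  also have "\<dots> \<le> (\<integral>\<^sup>+ s. indicator {s. 0 \<le> s \<and> P s} s \<partial>LS_measure f)"
    by (rule nn_integral_mono) (use assms(3) in \<open>auto simp: indicator_def\<close>)
  also have "\<dots> = 0"
    using assms(1) unfolding LS_indicator_integral_def .
  finally show ?thesis
    by simp
qed

lemma LS_indicator_integral_zero_imp_flat:
  assumes "nondecr f" "0 \<le> a" "a \<le> b" "LS_indicator_integral f P = 0"
    and "\<And>s. a < s \<Longrightarrow> s \<le> b \<Longrightarrow> P s"
  shows "f b \<le> f a"
proof -
  have "emeasure (LS_measure f) {a<..b} = 0"
    by (rule emeasure_LS_measure_null[OF assms(4)]) (use assms in auto)
  then have "LS_distribution f b - LS_distribution f a \<le> 0"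
    using emeasure_LS_measure_Ioc[OF assms(1,3)] by (simp add: ennreal_eq_0_iff)
  then show ?thesis
    using assms(2,3) by (simp add: LS_distribution_def)
qed

text \<open>Continuity of the measure from above along \<open>{x - 1/(n+1)<..x} \<down> {x}\<close>.\<close>
lemma LS_distribution_left_approx_no_atom:
  assumes "nondecr f" "emeasure (LS_measure f) {x} = 0" "e > 0"
  shows "\<exists>z<x. LS_distribution f x - LS_distribution f z < e"
proof -
  define A where "A n = {x - 1 / Suc n<..x}" for n :: nat
  have "decseq A"
  proof (rule decseq_SucI)
    fix n
    have "1 / real (Suc (Suc n)) \<le> 1 / real (Suc n)"
      by (simp add: frac_le)
    then show "A (Suc n) \<subseteq> A n"
      unfolding A_def by auto
  qed
  moreover have "(\<Inter>n. A n) = {x}"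
  proof (intro set_eqI iffI)
    fix y assume y: "y \<in> (\<Inter>n. A n)"
    show "y \<in> {x}"
    proof (rule ccontr)
      assume "y \<notin> {x}"
      with y have "x - y > 0" by (force simp: A_def)
      then obtain n where "inverse (real (Suc n)) < x - y"
        using reals_Archimedean by blast
      moreover have "x - inverse (real (Suc n)) < y"
        using y by (auto simp: A_def inverse_eq_divide)
      ultimately show False
        by simp
    qed
  qed (auto simp: A_def)
  moreover have "emeasure (LS_measure f) (A n) \<noteq> \<infinity>" for n
    unfolding A_def by (simp add: emeasure_LS_measure_Ioc[OF assms(1)])
  moreover have "range A \<subseteq> sets (LS_measure f)"
    by (auto simp: A_def LS_measure_def)
  ultimately have "(\<lambda>n. emeasure (LS_measure f) (A n)) \<longlonglongrightarrow> emeasure (LS_measure f) {x}"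
    using Lim_emeasure_decseq by metis
  then have "eventually (\<lambda>n. emeasure (LS_measure f) (A n) < ennreal e) sequentially"
    using assms(2,3) by (intro order_tendstoD(2)) auto
  then obtain n where n: "emeasure (LS_measure f) (A n) < ennreal e"
    by (auto dest: eventually_happens)
  have le: "x - 1 / Suc n \<le> x"
    by simp
  have "LS_distribution f x - LS_distribution f (x - 1 / Suc n) < e"
    using n LS_distribution_mono[OF assms(1) le]
    unfolding A_def emeasure_LS_measure_Ioc[OF assms(1) le]
    by (simp add: ennreal_less_iff)
  then show ?thesis
    by (intro exI[of _ "x - 1 / Suc n"]) auto
qed

lemma nondecr_le_at_no_atom:
  assumes g: "nondecr g" and h: "nondecr h" and "0 \<le> x"
    and no_atom: "emeasure (LS_measure g) {x} = 0"
    and left: "\<forall>z<x. \<exists>z'. z \<le> z' \<and> z' < x \<and> LS_distribution g z' \<le> LS_distribution h z'"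
  shows "g x \<le> h x"
proof (rule ccontr)
  assume "\<not> g x \<le> h x"
  then obtain z where z: "z < x" "LS_distribution g x - LS_distribution g z < g x - h x"
    using LS_distribution_left_approx_no_atom[OF g no_atom, of "g x - h x"] by auto
  obtain z' where z': "z \<le> z'" "z' < x" "LS_distribution g z' \<le> LS_distribution h z'"
    using left z(1) by blast
  have "LS_distribution g z \<le> LS_distribution g z'"
    by (rule LS_distribution_mono[OF g z'(1)])
  moreover have "LS_distribution h z' \<le> LS_distribution h x"
    using LS_distribution_mono[OF h] z'(2) by simp
  ultimately show False
    using z z' \<open>0 \<le> x\<close> by (simp add: LS_distribution_def split: if_splits)
qed

lemma nondecr_le_at_uncharged_point:
  assumes g: "nondecr g" and h: "nondecr h" and "0 \<le> x"
    and "LS_indicator_integral g P = 0" "P x"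
    and before: "\<And>s. 0 \<le> s \<Longrightarrow> s < x \<Longrightarrow> g s \<le> h s"
  shows "g x \<le> h x"
proof (rule nondecr_le_at_no_atom[OF g h \<open>0 \<le> x\<close>])
  show "emeasure (LS_measure g) {x} = 0"
    by (rule emeasure_LS_measure_null[OF assms(4)]) (use assms in auto)
  show "\<forall>z<x. \<exists>z'. z \<le> z' \<and> z' < x \<and> LS_distribution g z' \<le> LS_distribution h z'"
    using before by (auto simp: LS_distribution_def)
qed

lemma last_entry_before:
  fixes a u :: real
  assumes "a \<le> u" "B u"
  obtains w where "a \<le> w" "w \<le> u" "\<And>z. w < z \<Longrightarrow> z \<le> u \<Longrightarrow> B z"
    "\<And>z. a \<le> z \<Longrightarrow> z < w \<Longrightarrow> \<exists>z'. z \<le> z' \<and> z' \<le> w \<and> \<not> B z'"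
proof
  define W where "W = {v. a \<le> v \<and> v \<le> u \<and> (\<forall>z. v \<le> z \<and> z \<le> u \<longrightarrow> B z)}"
  have uW: "u \<in> W"
    using assms by (auto simp: W_def)
  have bdd: "bdd_below W"
    by (auto simp: W_def bdd_below_def)
  show "Inf W \<le> u"
    by (rule cInf_lower[OF uW bdd])
  show "a \<le> Inf W"
    by (rule cInf_greatest) (use uW in \<open>auto simp: W_def\<close>)
  show after: "B z" if "Inf W < z" "z \<le> u" for z
  proof -
    from that(1) obtain v where "v \<in> W" "v < z"
      using cInf_less_iff[OF _ bdd] uW by auto
    then show ?thesis
      using that by (auto simp: W_def)
  qed
  show "\<exists>z'. z \<le> z' \<and> z' \<le> Inf W \<and> \<not> B z'" if az: "a \<le> z" and zw: "z < Inf W" for z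
  proof -
    have "z \<notin> W"
      using zw cInf_lower[OF _ bdd] by force
    moreover have "z \<le> u"
      using zw \<open>Inf W \<le> u\<close> by linarith
    ultimately obtain z' where "z \<le> z'" "z' \<le> u" "\<not> B z'"
      using az unfolding W_def by auto
    then show ?thesis
      using after by (metis not_le)
  qed
qed

text \<open>\<open>g\<close> cannot overtake \<open>h\<close> if \<open>dg\<close> does not charge the times where \<open>g > h\<close>:
  on the last stretch \<open>(w, u]\<close> before a violation \<open>u\<close> on which \<open>g > h\<close>, \<open>g\<close> is flat,
  and \<open>g w > h w\<close> is excluded because then \<open>g\<close> has no atom at \<open>w\<close>.\<close>
lemma nondecr_le_propagates:
  assumes g: "nondecr g" and h: "nondecr h" and a: "0 \<le> a"
    and I: "LS_indicator_integral g P = 0"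
    and start: "\<And>v. 0 \<le> v \<Longrightarrow> v \<le> a \<Longrightarrow> g v \<le> h v"
    and charged: "\<And>v. a < v \<Longrightarrow> v < b \<Longrightarrow> h v < g v \<Longrightarrow> P v"
    and "0 \<le> u" "u < b"
  shows "g u \<le> h u"
proof (rule ccontr)
  assume neg: "\<not> g u \<le> h u"
  have "a \<le> u"
    using start \<open>0 \<le> u\<close> neg by force
  then obtain w where aw: "a \<le> w" and wu: "w \<le> u"
    and after_w: "\<And>z. w < z \<Longrightarrow> z \<le> u \<Longrightarrow> h z < g z"
    and before_w: "\<And>z. a \<le> z \<Longrightarrow> z < w \<Longrightarrow> \<exists>z'. z \<le> z' \<and> z' \<le> w \<and> \<not> h z' < g z'"
    using last_entry_before[of a u "\<lambda>z. h z < g z"] neg by auto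
  show False
  proof (cases "g w \<le> h w")
    case True
    have "g u \<le> g w"
      by (rule LS_indicator_integral_zero_imp_flat[OF g _ wu I])
        (use a aw after_w charged \<open>u < b\<close> in auto)
    moreover have "h w \<le> h u"
      using h wu aw a unfolding nondecr_def by auto
    ultimately show False
      using True neg by linarith
  next
    case False
    have aw': "a < w"
      using False start[of a] aw a by (cases "a = w") auto
    have "g w \<le> h w"
    proof (rule nondecr_le_at_no_atom[OF g h])
      show "emeasure (LS_measure g) {w} = 0"
        by (rule emeasure_LS_measure_null[OF I]) (use False charged aw' wu \<open>u < b\<close> a in auto)
      show "\<forall>z<w. \<exists>z'. z \<le> z' \<and> z' < w \<and> LS_distribution g z' \<le> LS_distribution h z'"
      proof (intro allI impI)
        fix z assume "z < w"
        show "\<exists>z'. z \<le> z' \<and> z' < w \<and> LS_distribution g z' \<le> LS_distribution h z'"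
        proof (cases "z \<le> a")
          case True
          then show ?thesis
            using start a aw' by (intro exI[of _ a]) (auto simp: LS_distribution_def)
        next
          case za: False
          then obtain z' where "z \<le> z'" "z' \<le> w" "\<not> h z' < g z'"
            using before_w[of z] \<open>z < w\<close> by auto
          moreover from this False have "z' \<noteq> w"
            by auto
          ultimately show ?thesis
            using za a by (intro exI[of _ z']) (auto simp: LS_distribution_def)
        qed
      qed
    qed (use aw a in auto)
    with False show False
      by simp
  qed
qed

lemma less_persists_right:
  fixes f g :: "real \<Rightarrow> 'a::{linorder_topology, dense_linorder}"
  assumes f: "(f \<longlongrightarrow> f t) (at_right t)" and g: "(g \<longlongrightarrow> g t) (at_right t)"
    and "f t < g t"
  shows "\<exists>e>0. \<forall>v. t \<le> v \<and> v < t + e \<longrightarrow> f v < g v"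
proof -
  obtain c where c: "f t < c" "c < g t"
    using dense[OF \<open>f t < g t\<close>] by blast
  have "eventually (\<lambda>v. f v < c) (at_right t)" "eventually (\<lambda>v. c < g v) (at_right t)"
    using order_tendstoD(2)[OF f c(1)] order_tendstoD(1)[OF g c(2)] .
  then have "eventually (\<lambda>v. f v < g v) (at_right t)"
    by eventually_elim auto
  then obtain b where b: "b > t" "\<And>v. t < v \<Longrightarrow> v < b \<Longrightarrow> f v < g v"
    unfolding eventually_at_right_field by blast
  show ?thesis
  proof (intro exI[of _ "b - t"] conjI allI impI)
    fix v assume "t \<le> v \<and> v < t + (b - t)"
    then show "f v < g v"
      using b(2) \<open>f t < g t\<close> by (cases "v = t") auto
  qed (use b in simp)
qed

lemma nonneg_real_right_induct:
  fixes t :: real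
  assumes step: "\<And>\<tau>. 0 \<le> \<tau> \<Longrightarrow> \<forall>s. 0 \<le> s \<and> s < \<tau> \<longrightarrow> P s \<Longrightarrow>
      \<exists>e>0. \<forall>v. \<tau> \<le> v \<and> v < \<tau> + e \<longrightarrow> P v"
    and "0 \<le> t"
  shows "P t"
proof (rule ccontr)
  assume "\<not> P t"
  define S where "S = {s. 0 \<le> s \<and> \<not> P s}"
  have S: "S \<noteq> {}" "bdd_below S"
    using \<open>0 \<le> t\<close> \<open>\<not> P t\<close> by (auto simp: S_def bdd_below_def)
  define \<tau> where "\<tau> = Inf S"
  have "0 \<le> \<tau>"
    unfolding \<tau>_def by (rule cInf_greatest[OF S(1)]) (auto simp: S_def)
  moreover have "\<forall>s. 0 \<le> s \<and> s < \<tau> \<longrightarrow> P s"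
    using cInf_lower[OF _ S(2)] unfolding \<tau>_def S_def by force
  ultimately obtain e where e: "e > 0" "\<forall>v. \<tau> \<le> v \<and> v < \<tau> + e \<longrightarrow> P v"
    using step by blast
  have "\<tau> + e \<le> Inf S"
  proof (rule cInf_greatest[OF S(1)])
    fix s assume s: "s \<in> S"
    then have "\<tau> \<le> s"
      unfolding \<tau>_def by (rule cInf_lower[OF _ S(2)])
    then show "\<tau> + e \<le> s"
      using s e by (force simp: S_def)
  qed
  then show False
    using e unfolding \<tau>_def by simp
qed

lemma nondecr_comparison_step:
  assumes g1: "nondecr g1" and h1: "nondecr h1" and g2: "nondecr g2" and h2: "nondecr h2"
    and I1: "LS_indicator_integral g1 Q1 = 0" and I2: "LS_indicator_integral g2 Q2 = 0"
    and "0 \<le> \<tau>" and Q1: "\<And>v. \<tau> \<le> v \<Longrightarrow> v < \<tau> + e \<Longrightarrow> Q1 v"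
    and not_Q2: "\<And>t. 0 \<le> t \<Longrightarrow> \<not> Q2 t \<Longrightarrow> h1 t - g1 t \<le> h2 t - g2 t"
    and before: "\<And>s. 0 \<le> s \<Longrightarrow> s < \<tau> \<Longrightarrow> g1 s \<le> h1 s \<and> g2 s \<le> h2 s"
    and "\<tau> \<le> v" "v < \<tau> + e"
  shows "g1 v \<le> h1 v \<and> g2 v \<le> h2 v"
proof -
  have at1: "g1 \<tau> \<le> h1 \<tau>"
    by (rule nondecr_le_at_uncharged_point[OF g1 h1 \<open>0 \<le> \<tau>\<close> I1])
      (use Q1 before \<open>\<tau> \<le> v\<close> \<open>v < \<tau> + e\<close> in auto)
  have at2: "g2 \<tau> \<le> h2 \<tau>"
  proof (cases "Q2 \<tau>")
    case True
    then show ?thesis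
      by (rule nondecr_le_at_uncharged_point[OF g2 h2 \<open>0 \<le> \<tau>\<close> I2]) (use before in auto)
  next
    case False
    then show ?thesis
      using not_Q2[OF \<open>0 \<le> \<tau>\<close>] at1 by linarith
  qed
  have side1: "g1 w \<le> h1 w" if "\<tau> \<le> w" "w < \<tau> + e" for w
  proof -
    have "g1 w \<le> g1 \<tau>"
      by (rule LS_indicator_integral_zero_imp_flat[OF g1 \<open>0 \<le> \<tau>\<close> that(1) I1]) (use Q1 that in auto)
    moreover have "h1 \<tau> \<le> h1 w"
      using h1 that \<open>0 \<le> \<tau>\<close> unfolding nondecr_def by auto
    ultimately show ?thesis
      using at1 by linarith
  qed
  have "g2 v \<le> h2 v"
  proof (rule nondecr_le_propagates[OF g2 h2 \<open>0 \<le> \<tau>\<close> I2])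
    show "g2 s \<le> h2 s" if "0 \<le> s" "s \<le> \<tau>" for s
      using before[of s] at2 that by (cases "s = \<tau>") auto
    show "Q2 s" if "\<tau> < s" "s < \<tau> + e" "h2 s < g2 s" for s
      using not_Q2[of s] side1[of s] that \<open>0 \<le> \<tau>\<close> by force
  qed (use \<open>0 \<le> \<tau>\<close> \<open>\<tau> \<le> v\<close> \<open>v < \<tau> + e\<close> in auto)
  then show ?thesis
    using side1 \<open>\<tau> \<le> v\<close> \<open>v < \<tau> + e\<close> by auto
qed

lemma nondecr_pairs_comparison:
  assumes nd: "nondecr g1" "nondecr h1" "nondecr g2" "nondecr h2"
    and I: "LS_indicator_integral g1 Q1 = 0" "LS_indicator_integral g2 Q2 = 0"
    and persist1: "\<And>t. 0 \<le> t \<Longrightarrow> Q1 t \<Longrightarrow> \<exists>e>0. \<forall>v. t \<le> v \<and> v < t + e \<longrightarrow> Q1 v"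
    and persist2: "\<And>t. 0 \<le> t \<Longrightarrow> Q2 t \<Longrightarrow> \<exists>e>0. \<forall>v. t \<le> v \<and> v < t + e \<longrightarrow> Q2 v"
    and cover: "\<And>t. 0 \<le> t \<Longrightarrow> Q1 t \<or> Q2 t"
    and not_Q1: "\<And>t. 0 \<le> t \<Longrightarrow> \<not> Q1 t \<Longrightarrow> h2 t - g2 t \<le> h1 t - g1 t"
    and not_Q2: "\<And>t. 0 \<le> t \<Longrightarrow> \<not> Q2 t \<Longrightarrow> h1 t - g1 t \<le> h2 t - g2 t"
    and "0 \<le> t"
  shows "g1 t \<le> h1 t \<and> g2 t \<le> h2 t"
proof (rule nonneg_real_right_induct[OF _ \<open>0 \<le> t\<close>])
  fix \<tau> :: real
  assume "0 \<le> \<tau>" and before: "\<forall>s. 0 \<le> s \<and> s < \<tau> \<longrightarrow> g1 s \<le> h1 s \<and> g2 s \<le> h2 s"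
  from cover[OF \<open>0 \<le> \<tau>\<close>]
  show "\<exists>e>0. \<forall>v. \<tau> \<le> v \<and> v < \<tau> + e \<longrightarrow> g1 v \<le> h1 v \<and> g2 v \<le> h2 v"
  proof
    assume "Q1 \<tau>"
    then obtain e where "e > 0" "\<forall>v. \<tau> \<le> v \<and> v < \<tau> + e \<longrightarrow> Q1 v"
      using persist1 \<open>0 \<le> \<tau>\<close> by blast
    then show ?thesis
      using nondecr_comparison_step[OF nd I \<open>0 \<le> \<tau>\<close>, of e] not_Q2 before by blast
  next
    assume "Q2 \<tau>"
    then obtain e where "e > 0" "\<forall>v. \<tau> \<le> v \<and> v < \<tau> + e \<longrightarrow> Q2 v"
      using persist2 \<open>0 \<le> \<tau>\<close> by blast
    then show ?thesis
      using nondecr_comparison_step[OF nd(3,4,1,2) I(2,1) \<open>0 \<le> \<tau>\<close>, of e] not_Q1 before by blast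
  qed
qed

text \<open>The finiteness conditions are needed: in \<open>ereal\<close>, \<open>\<infinity> - \<infinity> = -\<infinity> - -\<infinity> = \<infinity>\<close>.\<close>
lemma lower_less_upper_if_INF_gap_pos:
  fixes l r :: "real \<Rightarrow> ereal"
  assumes "(INF t\<in>{0..}. r t - l t) > 0" "0 \<le> t" "l t \<noteq> \<infinity>" "r t \<noteq> -\<infinity>"
  shows "l t < r t"
proof (rule ccontr)
  assume "\<not> l t < r t"
  then have "r t - l t \<le> 0"
    using assms(3,4) by (cases "l t"; cases "r t") auto
  moreover have "(INF t\<in>{0..}. r t - l t) \<le> r t - l t"
    using assms(2) by (intro INF_lower) auto
  ultimately show False
    using assms(1) by simp
qed

lemma constraining_processes_mono_lower_boundary:
  fixes l lt r :: "real \<Rightarrow> ereal" and \<phi> \<phi>t \<eta>l \<eta>r \<eta>lt \<eta>rt :: "real \<Rightarrow> real"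
  assumes gap: "\<And>t. 0 \<le> t \<Longrightarrow> l t < r t" and lower: "\<And>t. 0 \<le> t \<Longrightarrow> lt t \<le> l t"
    and \<phi>: "\<And>t. 0 \<le> t \<Longrightarrow> l t \<le> ereal (\<phi> t) \<and> ereal (\<phi> t) \<le> r t"
    and \<phi>t: "\<And>t. 0 \<le> t \<Longrightarrow> lt t \<le> ereal (\<phi>t t) \<and> ereal (\<phi>t t) \<le> r t"
    and cadlag: "cadlag \<phi>t" "cadlag r" "cadlag lt"
    and diff: "\<And>t. 0 \<le> t \<Longrightarrow> \<phi> t - \<phi>t t = (\<eta>l t - \<eta>lt t) - (\<eta>r t - \<eta>rt t)"
    and nd: "nondecr \<eta>l" "nondecr \<eta>r" "nondecr \<eta>lt" "nondecr \<eta>rt"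
    and Ilt: "LS_indicator_integral \<eta>lt (\<lambda>s. lt s < ereal (\<phi>t s)) = 0"
    and Irt: "LS_indicator_integral \<eta>rt (\<lambda>s. ereal (\<phi>t s) < r s) = 0"
    and "0 \<le> t"
  shows "\<eta>rt t \<le> \<eta>r t \<and> \<eta>lt t \<le> \<eta>l t"
proof (rule nondecr_pairs_comparison[OF nd(4,2,3,1) Irt Ilt _ _ _ _ _ \<open>0 \<le> t\<close>])
  fix t :: real assume "0 \<le> t"
  have right_cont: "((\<lambda>s. ereal (\<phi>t s)) \<longlongrightarrow> ereal (\<phi>t t)) (at_right t)"
      "(r \<longlongrightarrow> r t) (at_right t)" "(lt \<longlongrightarrow> lt t) (at_right t)"
    using cadlag \<open>0 \<le> t\<close> unfolding cadlag_def by auto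
  show "\<exists>e>0. \<forall>v. t \<le> v \<and> v < t + e \<longrightarrow> ereal (\<phi>t v) < r v" if "ereal (\<phi>t t) < r t"
    using less_persists_right[OF right_cont(1,2) that] .
  show "\<exists>e>0. \<forall>v. t \<le> v \<and> v < t + e \<longrightarrow> lt v < ereal (\<phi>t v)" if "lt t < ereal (\<phi>t t)"
    using less_persists_right[OF right_cont(3,1) that] .
  show "ereal (\<phi>t t) < r t \<or> lt t < ereal (\<phi>t t)"
    using gap[of t] lower[of t] \<phi>t[of t] \<open>0 \<le> t\<close> by (metis order.strict_trans2 order_le_less)
  show "\<eta>l t - \<eta>lt t \<le> \<eta>r t - \<eta>rt t" if "\<not> ereal (\<phi>t t) < r t"
  proof -
    have "ereal (\<phi> t) \<le> ereal (\<phi>t t)"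
      using \<phi>[of t] that \<open>0 \<le> t\<close> by (meson not_less order_trans)
    then show ?thesis
      using diff[OF \<open>0 \<le> t\<close>] by simp
  qed
  show "\<eta>r t - \<eta>rt t \<le> \<eta>l t - \<eta>lt t" if "\<not> lt t < ereal (\<phi>t t)"
  proof -
    have "ereal (\<phi>t t) \<le> ereal (\<phi> t)"
      using \<phi>[of t] lower[of t] that \<open>0 \<le> t\<close> by (meson not_less order_trans)
    then show ?thesis
      using diff[OF \<open>0 \<le> t\<close>] by simp
  qed
qed

theorem corollary3p2:
  fixes l lt r rt :: "real \<Rightarrow> ereal" and \<psi> \<eta>l \<eta>r \<eta>lt \<eta>rt :: "real \<Rightarrow> real"
  assumes "cadlag_minus l" and "cadlag_minus lt"
    and "cadlag_plus r" and "cadlag_plus rt"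
    and "\<forall>t\<ge>0. lt t \<le> l t"
    and "\<forall>t\<ge>0. r t = rt t"
    and "(INF t\<in>{0..}. r t - l t) > 0"
    and "cadlag \<psi>"
    and "constraining_pair \<psi> l r \<eta>l \<eta>r"
    and "constraining_pair \<psi> lt rt \<eta>lt \<eta>rt"
  shows "\<forall>t\<ge>0. \<eta>r t \<ge> \<eta>rt t \<and> \<eta>l t \<ge> \<eta>lt t"
proof -
  obtain \<phi> \<eta> where \<phi>: "\<forall>t\<ge>0. \<phi> t = \<psi> t + \<eta> t \<and> l t \<le> ereal (\<phi> t) \<and> ereal (\<phi> t) \<le> r t"
    and nd: "nondecr \<eta>l" "nondecr \<eta>r" and \<eta>: "\<forall>t\<ge>0. \<eta> t = \<eta>l t - \<eta>r t"
    using assms(9) unfolding constraining_pair_def by blast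
  obtain \<phi>t \<eta>t where "cadlag \<phi>t"
    and \<phi>t: "\<forall>t\<ge>0. \<phi>t t = \<psi> t + \<eta>t t \<and> lt t \<le> ereal (\<phi>t t) \<and> ereal (\<phi>t t) \<le> rt t"
    and ndt: "nondecr \<eta>lt" "nondecr \<eta>rt" and \<eta>t: "\<forall>t\<ge>0. \<eta>t t = \<eta>lt t - \<eta>rt t"
    and Ilt: "LS_indicator_integral \<eta>lt (\<lambda>s. lt s < ereal (\<phi>t s)) = 0"
    and Irt: "LS_indicator_integral \<eta>rt (\<lambda>s. ereal (\<phi>t s) < rt s) = 0"
    using assms(10) unfolding constraining_pair_def by blast
  have "{s. 0 \<le> s \<and> ereal (\<phi>t s) < rt s} = {s. 0 \<le> s \<and> ereal (\<phi>t s) < r s}"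
    using assms(6) by auto
  then have Irt': "LS_indicator_integral \<eta>rt (\<lambda>s. ereal (\<phi>t s) < r s) = 0"
    using Irt unfolding LS_indicator_integral_def by simp
  have gap: "l t < r t" if "0 \<le> t" for t
    using lower_less_upper_if_INF_gap_pos[OF assms(7) that] assms(1,3) that
    unfolding cadlag_minus_def cadlag_plus_def by blast
  show ?thesis
  proof (intro allI impI constraining_processes_mono_lower_boundary[OF gap _ _ _ \<open>cadlag \<phi>t\<close> _ _ _
        nd ndt Ilt Irt'])
    show "cadlag r" "cadlag lt"
      using assms(2,3) unfolding cadlag_plus_def cadlag_minus_def by auto
  qed (use assms(5,6) \<phi> \<phi>t \<eta> \<eta>t in auto)
qed

end
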